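(* Let $0<\gamma<1/2$ and let $\ell\ge1$ be a fixed integer. There is a sequence $\varepsilon_n\to0$ with the following property. Let $n$ be given, let $\mathcal X\subset B(0,R_n)\setminus\mathring B(0,(1-\gamma)R_n)$ be any finite set, and form the graph on $\mathcal X$ joining two points iff their hyperbolic distance is at most $R_n$. If $y_1,y_2\in\mathcal X$ are joined by a path of length $\ell$ in this graph, then the angle $\theta_{12}$ between $y_1$ and $y_2$ as seen from the origin satisfies $$\theta_{12}\le(1+\varepsilon_n)\,2\ell\,e^{-\zeta(1-2\gamma)R_n/2}.$$
   Context: Fix an integer $d\ge2$ and $\zeta>0$. The Poincaré ball $B_d^{(\zeta)}$ is the open unit ball of $\mathbb R^d$ with metric $ds^2=\frac{4}{\zeta^2}\frac{|dx|^2}{(1-|x|^2)^2}$ and hyperbolic distance $d(\cdot,\cdot)$. $B(0,R)$ is the closed hyperbolic ball of radius $R$ about the origin, and $\mathring B$ its interior. $R_n\to\infty$ is a deterministic sequence. The angle between two points is the Euclidean angle between their position vectors. *)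

theory Defs
  imports "HOL-Analysis.Analysis"
begin

text \<open>Poincare ball model with metric (4/zeta^2)|dx|^2/(1-|x|^2)^2 (curvature -zeta^2).\<close>

definition poincare_ball :: "(real^'n) set" where
  "poincare_ball = {x. norm x < 1}"

definition hdist :: "real \<Rightarrow> real^'n \<Rightarrow> real^'n \<Rightarrow> real" where
  "hdist \<zeta> x y = arcosh (1 + 2 * (norm (x - y))^2 / ((1 - (norm x)^2) * (1 - (norm y)^2))) / \<zeta>"

definition hball :: "real \<Rightarrow> real \<Rightarrow> (real^'n) set" where
  "hball \<zeta> R = {x \<in> poincare_ball. hdist \<zeta> 0 x \<le> R}"

definition hball_open :: "real \<Rightarrow> real \<Rightarrow> (real^'n) set" where
  "hball_open \<zeta> R = {x \<in> poincare_ball. hdist \<zeta> 0 x < R}"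

definition vec_angle :: "real^'n \<Rightarrow> real^'n \<Rightarrow> real" where
  "vec_angle x y = arccos ((x \<bullet> y) / (norm x * norm y))"

definition is_path :: "real \<Rightarrow> real \<Rightarrow> (real^'n) set \<Rightarrow> nat \<Rightarrow> (nat \<Rightarrow> real^'n) \<Rightarrow> bool" where
  "is_path \<zeta> R X l p \<longleftrightarrow> (\<forall>i\<le>l. p i \<in> X) \<and> inj_on p {0..l} \<and>
     (\<forall>i<l. hdist \<zeta> (p i) (p (Suc i)) \<le> R)"

end

theory Submission
  imports Defs
begin

text \<open>
  Write r(x) = \<zeta> d(0, x) and let \<theta> be the angle between x and y. The hyperbolic law of cosines
  gives cosh (\<zeta> d(x, y)) - 1 = cosh (r(x) - r(y)) - 1 + sinh r(x) sinh r(y) (1 - cos \<theta>), so for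
  two adjacent vertices of the annulus 1 - cos \<theta> \<le> (cosh (\<zeta> R) - 1) / sinh (\<zeta> (1 - \<gamma>) R)^2,
  which is asymptotic to 2 exp (- \<zeta> (1 - 2\<gamma>) R). By the half-angle formula every edge therefore
  subtends an angle of at most (1 + o(1)) 2 exp (- \<zeta> (1 - 2\<gamma>) R / 2), and the triangle inequality
  for angles between directions adds these bounds up along the l edges of the path.
\<close>

lemma inner_sgn_sgn:
  fixes x y :: "'a::real_inner"
  shows "sgn x \<bullet> sgn y = (x \<bullet> y) / (norm x * norm y)"
  by (simp add: sgn_div_norm divide_inverse ac_simps)

lemma abs_inner_sgn_sgn_le_1:
  fixes x y :: "'a::real_inner"
  shows "\<bar>sgn x \<bullet> sgn y\<bar> \<le> 1"
proof -
  have "\<bar>sgn x \<bullet> sgn y\<bar> \<le> norm (sgn x) * norm (sgn y)" by (rule Cauchy_Schwarz_ineq2)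
  also have "\<dots> \<le> 1" by (simp add: norm_sgn)
  finally show ?thesis .
qed

lemma vec_angle_eq_arccos_sgn: "vec_angle x y = arccos (sgn x \<bullet> sgn y)"
  by (simp add: vec_angle_def inner_sgn_sgn)

lemma cos_vec_angle: "cos (vec_angle x y) = sgn x \<bullet> sgn y"
  using abs_inner_sgn_sgn_le_1[of x y] by (simp add: vec_angle_eq_arccos_sgn)

lemma inner_eq_norm_mult_cos_vec_angle: "x \<bullet> y = norm x * norm y * cos (vec_angle x y)"
  by (cases "x = 0 \<or> y = 0") (auto simp: cos_vec_angle inner_sgn_sgn)

lemma vec_angle_nonneg: "0 \<le> vec_angle x y"
  using abs_inner_sgn_sgn_le_1[of x y] by (simp add: vec_angle_eq_arccos_sgn arccos_lbound)

lemma vec_angle_le_pi: "vec_angle x y \<le> pi"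
  using abs_inner_sgn_sgn_le_1[of x y] by (simp add: vec_angle_eq_arccos_sgn arccos_ubound)

lemma vec_angle_refl:
  assumes "x \<noteq> 0" shows "vec_angle x x = 0"
proof -
  have "sgn x \<bullet> sgn x = 1" using assms by (simp add: norm_sgn flip: norm_eq_1)
  then show ?thesis by (simp add: vec_angle_eq_arccos_sgn)
qed

lemma inner_unit_ge_cos_add:
  fixes u v w :: "'a::real_inner"
  assumes "norm u = 1" "norm v = 1" "norm w = 1"
  shows "(u \<bullet> v) * (v \<bullet> w) - sqrt (1 - (u \<bullet> v)\<^sup>2) * sqrt (1 - (v \<bullet> w)\<^sup>2) \<le> u \<bullet> w"
proof -
  have vv: "v \<bullet> v = 1" using assms(2) by (simp add: norm_eq_1)
  have norm_perp: "norm (a - (a \<bullet> v) *\<^sub>R v) = sqrt (1 - (a \<bullet> v)\<^sup>2)" if "norm a = 1" for a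
  proof -
    have "(norm (a - (a \<bullet> v) *\<^sub>R v))\<^sup>2 = 1 - (a \<bullet> v)\<^sup>2"
      using that vv unfolding power2_norm_eq_inner
      by (simp add: norm_eq_1 inner_diff_left inner_diff_right inner_commute algebra_simps power2_eq_square)
    then show ?thesis by (simp add: real_sqrt_unique)
  qed
  define u' where "u' = u - (u \<bullet> v) *\<^sub>R v"
  define w' where "w' = w - (w \<bullet> v) *\<^sub>R v"
  have "u \<bullet> w = (u \<bullet> v) * (v \<bullet> w) + u' \<bullet> w'"
    using vv by (simp add: u'_def w'_def inner_diff_left inner_diff_right inner_commute algebra_simps)
  moreover have "- (norm u' * norm w') \<le> u' \<bullet> w'"
    using Cauchy_Schwarz_ineq2[of u' w'] by linarith
  moreover have "norm u' = sqrt (1 - (u \<bullet> v)\<^sup>2)" "norm w' = sqrt (1 - (v \<bullet> w)\<^sup>2)"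
    using norm_perp[of u] norm_perp[of w] assms by (simp_all add: u'_def w'_def inner_commute)
  ultimately show ?thesis by simp
qed

lemma vec_angle_triangle: "vec_angle x z \<le> vec_angle x y + vec_angle y z"
proof (cases "x = 0 \<or> y = 0 \<or> z = 0")
  case True
  then show ?thesis
    using vec_angle_nonneg[of x y] vec_angle_nonneg[of y z] vec_angle_le_pi[of x z]
    by (auto simp: vec_angle_def)
next
  case False
  define \<alpha> where "\<alpha> = vec_angle x y"
  define \<beta> where "\<beta> = vec_angle y z"
  show ?thesis
  proof (cases "\<alpha> + \<beta> \<le> pi")
    case True
    have bounds: "\<bar>sgn a \<bullet> sgn b\<bar> \<le> 1" for a b :: "real^'a" by (rule abs_inner_sgn_sgn_le_1)
    have "cos (\<alpha> + \<beta>) \<le> sgn x \<bullet> sgn z"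
      using inner_unit_ge_cos_add[of "sgn x" "sgn y" "sgn z"] False bounds[of x y] bounds[of y z]
      by (simp add: cos_add \<alpha>_def \<beta>_def cos_vec_angle vec_angle_eq_arccos_sgn sin_arccos_abs norm_sgn)
    then have "vec_angle x z \<le> arccos (cos (\<alpha> + \<beta>))"
      using bounds[of x z] by (simp add: vec_angle_eq_arccos_sgn arccos_le_arccos)
    also have "\<dots> = \<alpha> + \<beta>"
      using True by (intro arccos_cos add_nonneg_nonneg) (simp_all add: \<alpha>_def \<beta>_def vec_angle_nonneg)
    finally show ?thesis by (simp add: \<alpha>_def \<beta>_def)
  next
    case False
    then show ?thesis using vec_angle_le_pi[of x z] by (simp add: \<alpha>_def \<beta>_def)
  qed
qed

lemma vec_angle_chain_le:
  fixes p :: "nat \<Rightarrow> real^'n"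
  assumes "p 0 \<noteq> 0" and "\<And>i. i < l \<Longrightarrow> vec_angle (p i) (p (Suc i)) \<le> B"
  shows "vec_angle (p 0) (p l) \<le> real l * B"
  using assms(2)
proof (induction l)
  case 0
  then show ?case using assms(1) by (simp add: vec_angle_refl)
next
  case (Suc l)
  have "vec_angle (p 0) (p (Suc l)) \<le> vec_angle (p 0) (p l) + vec_angle (p l) (p (Suc l))"
    by (rule vec_angle_triangle)
  also have "\<dots> \<le> real l * B + B" using Suc by (intro add_mono) auto
  finally show ?case by (simp add: algebra_simps)
qed

lemma hdist_arcosh_arg_ge_1:
  fixes x y :: "real^'n"
  assumes "norm x < 1" "norm y < 1"
  shows "1 \<le> 1 + 2 * (norm (x - y))\<^sup>2 / ((1 - (norm x)\<^sup>2) * (1 - (norm y)\<^sup>2))"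
proof -
  have "(norm x)\<^sup>2 < 1" "(norm y)\<^sup>2 < 1" using assms by (simp_all add: power_less_one_iff abs_less_iff)
  then show ?thesis by simp
qed

lemma cosh_hdist:
  assumes "\<zeta> \<noteq> 0" "norm x < 1" "norm y < 1"
  shows "cosh (\<zeta> * hdist \<zeta> x y) = 1 + 2 * (norm (x - y))\<^sup>2 / ((1 - (norm x)\<^sup>2) * (1 - (norm y)\<^sup>2))"
  using assms hdist_arcosh_arg_ge_1[OF assms(2,3)] by (simp add: hdist_def)

lemma hdist_nonneg: "\<zeta> > 0 \<Longrightarrow> norm x < 1 \<Longrightarrow> norm y < 1 \<Longrightarrow> 0 \<le> hdist \<zeta> x y"
  using hdist_arcosh_arg_ge_1[of x y] by (simp add: hdist_def)

lemma sinh_hdist_origin: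
  fixes x :: "real^'n"
  assumes "\<zeta> \<noteq> 0" "norm x < 1"
  shows "sinh (\<zeta> * hdist \<zeta> 0 x) = 2 * norm x / (1 - (norm x)\<^sup>2)"
proof -
  define a where "a = norm x"
  have a: "0 \<le> a" "a\<^sup>2 < 1" using assms by (simp_all add: a_def power_less_one_iff abs_less_iff)
  have "1 - a\<^sup>2 \<noteq> 0" using a by simp
  then have "(1 + 2 * a\<^sup>2 / (1 - a\<^sup>2))\<^sup>2 - 1 = (2 * a / (1 - a\<^sup>2))\<^sup>2"
    by (simp add: divide_simps) algebra
  moreover have "0 \<le> 2 * a / (1 - a\<^sup>2)" using a by simp
  ultimately show ?thesis
    using assms a hdist_arcosh_arg_ge_1[of x 0]
    by (simp add: hdist_def sinh_arcosh_real a_def[symmetric])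
qed

lemma cosh_hdist_origin:
  fixes x :: "real^'n"
  assumes "\<zeta> \<noteq> 0" "norm x < 1"
  shows "cosh (\<zeta> * hdist \<zeta> 0 x) = (1 + (norm x)\<^sup>2) / (1 - (norm x)\<^sup>2)"
proof -
  have "(norm x)\<^sup>2 < 1" using assms by (simp add: power_less_one_iff abs_less_iff)
  then show ?thesis using cosh_hdist[of \<zeta> 0 x] assms by (simp add: field_simps)
qed

lemma hdist_law_of_cosines:
  fixes x y :: "real^'n"
  assumes "\<zeta> \<noteq> 0" "norm x < 1" "norm y < 1"
  shows "cosh (\<zeta> * hdist \<zeta> x y) =
    cosh (\<zeta> * hdist \<zeta> 0 x) * cosh (\<zeta> * hdist \<zeta> 0 y)
      - sinh (\<zeta> * hdist \<zeta> 0 x) * sinh (\<zeta> * hdist \<zeta> 0 y) * cos (vec_angle x y)"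
proof -
  define a b c where "a = norm x" and "b = norm y" and "c = cos (vec_angle x y)"
  have a: "a\<^sup>2 < 1" and b: "b\<^sup>2 < 1"
    using assms by (simp_all add: a_def b_def power_less_one_iff abs_less_iff)
  have d: "(norm (x - y))\<^sup>2 = a\<^sup>2 + b\<^sup>2 - 2 * (a * b * c)"
    unfolding a_def b_def c_def power2_norm_eq_inner inner_eq_norm_mult_cos_vec_angle[symmetric]
    by (simp add: inner_diff_left inner_diff_right inner_commute)
  have "1 - a\<^sup>2 \<noteq> 0" "1 - b\<^sup>2 \<noteq> 0" using a b by simp_all
  then show ?thesis
    unfolding cosh_hdist[OF assms] cosh_hdist_origin[OF assms(1,2)] cosh_hdist_origin[OF assms(1,3)]
      sinh_hdist_origin[OF assms(1,2)] sinh_hdist_origin[OF assms(1,3)] d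
      a_def[symmetric] b_def[symmetric] c_def[symmetric]
    by (simp add: divide_simps) algebra
qed

lemma sinh_mult_sinh_mult_one_minus_cos_le:
  fixes x y :: "real^'n"
  assumes "\<zeta> \<noteq> 0" "norm x < 1" "norm y < 1"
  shows "sinh (\<zeta> * hdist \<zeta> 0 x) * sinh (\<zeta> * hdist \<zeta> 0 y) * (1 - cos (vec_angle x y))
    \<le> cosh (\<zeta> * hdist \<zeta> x y) - 1"
proof -
  define s t where "s = \<zeta> * hdist \<zeta> 0 x" and "t = \<zeta> * hdist \<zeta> 0 y"
  have "cosh (\<zeta> * hdist \<zeta> x y) - 1
      = (cosh (s - t) - 1) + sinh s * sinh t * (1 - cos (vec_angle x y))"
    using hdist_law_of_cosines[OF assms] by (simp add: cosh_diff s_def t_def algebra_simps)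
  moreover have "1 \<le> cosh (s - t)" by (rule cosh_real_ge_1)
  ultimately show ?thesis by (simp add: s_def t_def)
qed

lemma hball_diff_hball_openD:
  "x \<in> hball \<zeta> R - hball_open \<zeta> r \<Longrightarrow> norm x < 1 \<and> r \<le> hdist \<zeta> 0 x"
  by (auto simp: hball_def hball_open_def poincare_ball_def)

lemma one_minus_cos_vec_angle_le:
  fixes x y :: "real^'n"
  assumes "\<zeta> > 0" "r > 0" "norm x < 1" "norm y < 1"
    and "r \<le> hdist \<zeta> 0 x" "r \<le> hdist \<zeta> 0 y" "hdist \<zeta> x y \<le> R"
  shows "1 - cos (vec_angle x y) \<le> (cosh (\<zeta> * R) - 1) / (sinh (\<zeta> * r))\<^sup>2"
proof -
  define c where "c = 1 - cos (vec_angle x y)"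
  have "0 \<le> c" by (simp add: c_def)
  have sinh_r: "0 < sinh (\<zeta> * r)" using assms by simp
  have "sinh (\<zeta> * r) \<le> sinh (\<zeta> * hdist \<zeta> 0 x)" "sinh (\<zeta> * r) \<le> sinh (\<zeta> * hdist \<zeta> 0 y)"
    using assms by simp_all
  then have "(sinh (\<zeta> * r))\<^sup>2 * c \<le> sinh (\<zeta> * hdist \<zeta> 0 x) * sinh (\<zeta> * hdist \<zeta> 0 y) * c"
    using sinh_r \<open>0 \<le> c\<close> by (intro mult_right_mono) (simp_all add: power2_eq_square mult_mono)
  also have "\<dots> \<le> cosh (\<zeta> * hdist \<zeta> x y) - 1"
    unfolding c_def using assms by (intro sinh_mult_sinh_mult_one_minus_cos_le) auto
  also have "\<dots> \<le> cosh (\<zeta> * R) - 1"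
    using assms hdist_nonneg[of \<zeta> x y] by (simp add: cosh_real_nonneg_le_iff)
  finally have "c * (sinh (\<zeta> * r))\<^sup>2 \<le> cosh (\<zeta> * R) - 1" by (simp add: ac_simps)
  moreover have "0 < (sinh (\<zeta> * r))\<^sup>2" using sinh_r by (rule zero_less_power)
  ultimately show ?thesis by (simp add: c_def pos_le_divide_eq)
qed

text \<open>With \<open>T = \<zeta> R\<close>, this bounds \<open>1 - cos \<theta>\<close> for an edge of the annulus graph.\<close>

definition edge_defect_bound :: "real \<Rightarrow> real \<Rightarrow> real" where
  "edge_defect_bound \<gamma> T = 2 * exp (- (1 - 2 * \<gamma>) * T) / (1 - exp (- 2 * (1 - \<gamma>) * T))\<^sup>2"

lemma cosh_sub_one_div_sinh_sq_le:
  fixes T \<gamma> :: real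
  assumes "T > 0" "\<gamma> < 1"
  shows "(cosh T - 1) / (sinh ((1 - \<gamma>) * T))\<^sup>2 \<le> edge_defect_bound \<gamma> T"
proof -
  define E where "E = exp ((1 - \<gamma>) * T)"
  have "E > 1" using assms by (simp add: E_def)
  then have E2: "E\<^sup>2 - 1 > 0" by (simp add: one_less_power)
  have "cosh T = (exp T + exp (- T)) / 2" by (simp add: cosh_def)
  moreover have "exp (- T) \<le> 1" using assms by simp
  ultimately have cosh_le: "cosh T - 1 \<le> exp T / 2" by argo
  have sinh_sq: "(sinh ((1 - \<gamma>) * T))\<^sup>2 = (E\<^sup>2 - 1)\<^sup>2 / (4 * E\<^sup>2)"
  proof -
    have "sinh ((1 - \<gamma>) * T) = (E - inverse E) / 2" by (simp add: sinh_def E_def exp_minus)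
    then show ?thesis using \<open>E > 1\<close> by (simp add: divide_simps) algebra
  qed
  have bound_eq: "edge_defect_bound \<gamma> T = (exp T / 2) * (4 * E\<^sup>2) / (E\<^sup>2 - 1)\<^sup>2"
  proof -
    have "exp (- (1 - 2 * \<gamma>) * T) = exp T / E\<^sup>2" "exp (- 2 * (1 - \<gamma>) * T) = 1 / E\<^sup>2"
      by (simp_all add: E_def exp_diff exp_minus field_simps flip: exp_add exp_of_nat_mult)
    then have "edge_defect_bound \<gamma> T = 2 * (exp T / E\<^sup>2) / (1 - 1 / E\<^sup>2)\<^sup>2"
      unfolding edge_defect_bound_def by simp
    also have "\<dots> = (exp T / 2) * (4 * E\<^sup>2) / (E\<^sup>2 - 1)\<^sup>2"
      using \<open>E > 1\<close> E2 by (simp add: divide_simps)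
    finally show ?thesis .
  qed
  have "(cosh T - 1) / (sinh ((1 - \<gamma>) * T))\<^sup>2 = (cosh T - 1) * (4 * E\<^sup>2) / (E\<^sup>2 - 1)\<^sup>2"
    using E2 by (simp add: sinh_sq)
  also have "\<dots> \<le> (exp T / 2) * (4 * E\<^sup>2) / (E\<^sup>2 - 1)\<^sup>2"
    using cosh_le by (intro divide_right_mono mult_right_mono) auto
  finally show ?thesis unfolding bound_eq .
qed

lemma angle_le_of_one_minus_cos_le:
  fixes \<theta> K :: real
  assumes "0 \<le> \<theta>" "\<theta> \<le> pi" "1 - cos \<theta> \<le> K" "K < 2"
  shows "\<theta> \<le> 2 * sqrt (K / (2 - K))"
proof -
  define u where "u = \<theta> / 2"
  have "\<theta> \<noteq> pi" using assms by auto
  then have u: "0 \<le> u" "u < pi / 2" using assms by (auto simp: u_def)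
  have "0 \<le> tan u" using u by (simp add: tan_pos_pi2_le)
  have half: "1 - cos \<theta> = 2 * (sin u)\<^sup>2" "1 + cos \<theta> = 2 * (cos u)\<^sup>2"
    using cos_double_sin[of u] cos_double_cos[of u] by (simp_all add: u_def)
  have "(tan u)\<^sup>2 = (1 - cos \<theta>) / (1 + cos \<theta>)"
    unfolding half by (simp add: tan_def power_divide)
  also have "\<dots> \<le> K / (2 - K)"
    using assms cos_le_one[of \<theta>] by (intro frac_le) linarith+
  finally have "tan u \<le> sqrt (K / (2 - K))" using \<open>0 \<le> tan u\<close> by (simp add: real_le_rsqrt)
  moreover have "u \<le> tan u"
    using arctan_le_self[OF \<open>0 \<le> tan u\<close>] u by (simp add: arctan_tan)
  ultimately show ?thesis by (simp add: u_def)
qed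

lemma vec_angle_le_of_edge:
  fixes x y :: "real^'n" and \<zeta> \<gamma> R :: real
  defines "K \<equiv> edge_defect_bound \<gamma> (\<zeta> * R)"
  assumes "\<zeta> > 0" "\<gamma> < 1" "R > 0" "K < 2"
    and "x \<in> hball \<zeta> R - hball_open \<zeta> ((1 - \<gamma>) * R)" "y \<in> hball \<zeta> R - hball_open \<zeta> ((1 - \<gamma>) * R)"
    and "hdist \<zeta> x y \<le> R"
  shows "vec_angle x y \<le> 2 * sqrt (K / (2 - K))"
proof (rule angle_le_of_one_minus_cos_le)
  have "1 - cos (vec_angle x y) \<le> (cosh (\<zeta> * R) - 1) / (sinh (\<zeta> * ((1 - \<gamma>) * R)))\<^sup>2"
    using assms hball_diff_hball_openD by (intro one_minus_cos_vec_angle_le) auto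
  also have "\<dots> \<le> K"
    using cosh_sub_one_div_sinh_sq_le[of "\<zeta> * R" \<gamma>] assms by (simp add: ac_simps)
  finally show "1 - cos (vec_angle x y) \<le> K" .
qed (use assms vec_angle_nonneg vec_angle_le_pi in auto)

lemma exp_neg_mult_tendsto_0: "c > 0 \<Longrightarrow> ((\<lambda>T. exp (- c * T)) \<longlongrightarrow> (0::real)) at_top"
  by (auto intro!: filterlim_compose[OF exp_at_bot] filterlim_tendsto_pos_mult_at_top filterlim_ident
      simp: filterlim_uminus_at_bot)

lemma edge_defect_bound_tendsto_0:
  assumes "\<gamma> < 1/2"
  shows "(edge_defect_bound \<gamma> \<longlongrightarrow> 0) at_top"
proof -
  have "((\<lambda>T. 2 * exp (- (1 - 2 * \<gamma>) * T) / (1 - exp (- (2 * (1 - \<gamma>)) * T))\<^sup>2)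
      \<longlongrightarrow> 2 * 0 / (1 - 0)\<^sup>2) at_top"
    using assms by (intro tendsto_intros exp_neg_mult_tendsto_0) auto
  then show ?thesis by (simp add: edge_defect_bound_def[abs_def])
qed

text \<open>The relative error \<open>\<epsilon>\<close> of the theorem as a function of \<open>T = \<zeta> R\<close>.\<close>

definition edge_angle_error :: "real \<Rightarrow> real \<Rightarrow> real" where
  "edge_angle_error \<gamma> T =
    sqrt (edge_defect_bound \<gamma> T / (2 - edge_defect_bound \<gamma> T)) / exp (- (1 - 2 * \<gamma>) * T / 2) - 1"

lemma edge_angle_error_tendsto_0:
  fixes \<gamma> :: real
  assumes "\<gamma> < 1/2"
  shows "(edge_angle_error \<gamma> \<longlongrightarrow> 0) at_top"
proof -
  define K where "K = edge_defect_bound \<gamma>"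
  define w where "w T = exp (- (2 * (1 - \<gamma>)) * T)" for T
  have error_eq: "edge_angle_error \<gamma> T = sqrt (2 / ((1 - w T)\<^sup>2 * (2 - K T))) - 1" for T
  proof -
    define a where "a = exp (- (1 - 2 * \<gamma>) * T / 2)"
    have "K T = a\<^sup>2 * (2 / (1 - w T)\<^sup>2)"
      by (simp add: K_def edge_defect_bound_def a_def w_def flip: exp_of_nat_mult)
    then have "K T / (2 - K T) = a\<^sup>2 * (2 / ((1 - w T)\<^sup>2 * (2 - K T)))"
      by simp
    moreover have "a > 0" by (simp add: a_def)
    ultimately have "sqrt (K T / (2 - K T)) / a = sqrt (2 / ((1 - w T)\<^sup>2 * (2 - K T)))"
      by (simp only: real_sqrt_mult real_sqrt_abs) simp
    then show ?thesis by (simp add: edge_angle_error_def K_def a_def)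
  qed
  have "((\<lambda>T. sqrt (2 / ((1 - w T)\<^sup>2 * (2 - K T))) - 1)
      \<longlongrightarrow> sqrt (2 / ((1 - 0)\<^sup>2 * (2 - 0))) - 1) at_top"
    using assms unfolding w_def K_def
    by (intro tendsto_intros exp_neg_mult_tendsto_0 edge_defect_bound_tendsto_0) auto
  then show ?thesis unfolding error_eq by simp
qed

lemma vec_angle_path_le:
  fixes p :: "nat \<Rightarrow> real^'n" and \<zeta> \<gamma> R :: real
  defines "K \<equiv> edge_defect_bound \<gamma> (\<zeta> * R)"
  assumes "\<zeta> > 0" "\<gamma> < 1" "R > 0" "K < 2"
    and "X \<subseteq> hball \<zeta> R - hball_open \<zeta> ((1 - \<gamma>) * R)" "is_path \<zeta> R X l p"
  shows "vec_angle (p 0) (p l)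
    \<le> (1 + edge_angle_error \<gamma> (\<zeta> * R)) * (2 * real l) * exp (- \<zeta> * (1 - 2*\<gamma>) * R / 2)"
proof -
  have "vec_angle (p 0) (p l) \<le> real l * (2 * sqrt (K / (2 - K)))"
  proof (rule vec_angle_chain_le)
    have "(1 - \<gamma>) * R \<le> hdist \<zeta> 0 (p 0)" "0 < (1 - \<gamma>) * R"
      using assms hball_diff_hball_openD[of "p 0"] by (auto simp: is_path_def)
    then show "p 0 \<noteq> 0" by (auto simp: hdist_def)
    have mem: "p j \<in> hball \<zeta> R - hball_open \<zeta> ((1 - \<gamma>) * R)" if "j \<le> l" for j
      using assms(6,7) that unfolding is_path_def by blast
    show "vec_angle (p i) (p (Suc i)) \<le> 2 * sqrt (K / (2 - K))" if "i < l" for i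
      using assms(2-5,7) that mem[of i] mem[of "Suc i"] unfolding K_def is_path_def
      by (intro vec_angle_le_of_edge) auto
  qed
  moreover have exp_eq: "exp (- (1 - 2 * \<gamma>) * (\<zeta> * R) / 2) = exp (- \<zeta> * (1 - 2*\<gamma>) * R / 2)"
    by (simp add: algebra_simps)
  ultimately show ?thesis unfolding edge_angle_error_def exp_eq K_def[symmetric] by (simp add: mult_ac)
qed

lemma vec_angle_le_pi_scaled:
  assumes "0 < c"
  shows "vec_angle x y \<le> (1 + pi / c) * c"
proof -
  have "(1 + pi / c) * c = c + pi" using assms by (simp add: field_simps)
  then show ?thesis using assms vec_angle_le_pi[of x y] by linarith
qed

theorem mainTheorem12:
  fixes \<zeta> \<gamma> :: real and l :: nat and R :: "nat \<Rightarrow> real"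
  assumes "CARD('n) \<ge> 2"
    and "\<zeta> > 0"
    and "0 < \<gamma>" and "\<gamma> < 1/2"
    and "l \<ge> 1"
    and "filterlim R at_top sequentially"
  shows "\<exists>\<epsilon> :: nat \<Rightarrow> real. \<epsilon> \<longlonglongrightarrow> 0 \<and>
    (\<forall>n. \<forall>X :: (real^'n) set. \<forall>p.
       finite X \<longrightarrow> X \<subseteq> hball \<zeta> (R n) - hball_open \<zeta> ((1 - \<gamma>) * R n) \<longrightarrow>
       is_path \<zeta> (R n) X l p \<longrightarrow>
       vec_angle (p 0) (p l) \<le> (1 + \<epsilon> n) * (2 * real l) * exp (- \<zeta> * (1 - 2*\<gamma>) * R n / 2))"
proof -
  \<comment> \<open>For the finitely many \<open>n\<close> where the
    edge estimate is unavailable, \<open>\<epsilon> n\<close> is chosen large enough for the trivial bound \<open>\<theta> \<le> \<pi>\<close>.\<close>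
  define T where "T n = \<zeta> * R n" for n
  define good where "good n \<longleftrightarrow> 0 < R n \<and> edge_defect_bound \<gamma> (T n) < 2" for n
  define \<epsilon> where "\<epsilon> n = (if good n then edge_angle_error \<gamma> (T n)
    else pi / (2 * real l * exp (- \<zeta> * (1 - 2*\<gamma>) * R n / 2)))" for n
  have T: "filterlim T at_top sequentially"
    unfolding T_def using assms(2,6) by (rule filterlim_tendsto_pos_mult_at_top[OF tendsto_const])
  have "eventually (\<lambda>n. 0 < R n) sequentially"
    using assms(6) by (simp add: filterlim_at_top_dense)
  moreover have "eventually (\<lambda>n. edge_defect_bound \<gamma> (T n) < 2) sequentially"
    using filterlim_compose[OF edge_defect_bound_tendsto_0[OF assms(4)] T] by (rule order_tendstoD) simp
  ultimately have "eventually (\<lambda>n. edge_angle_error \<gamma> (T n) = \<epsilon> n) sequentially"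
    by eventually_elim (simp add: \<epsilon>_def good_def)
  with filterlim_compose[OF edge_angle_error_tendsto_0[OF assms(4)] T] have "\<epsilon> \<longlonglongrightarrow> 0"
    by (rule Lim_transform_eventually)
  moreover have "vec_angle (p 0) (p l) \<le> (1 + \<epsilon> n) * (2 * real l) * exp (- \<zeta> * (1 - 2*\<gamma>) * R n / 2)"
    if "X \<subseteq> hball \<zeta> (R n) - hball_open \<zeta> ((1 - \<gamma>) * R n)" "is_path \<zeta> (R n) X l p"
    for n and X :: "(real^'n) set" and p
  proof (cases "good n")
    case True
    then have \<epsilon>_eq: "\<epsilon> n = edge_angle_error \<gamma> (\<zeta> * R n)" by (simp add: \<epsilon>_def T_def)
    show ?thesis
      unfolding \<epsilon>_eq
      by (rule vec_angle_path_le) (use True that assms(2,4) in \<open>auto simp: good_def T_def\<close>)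
  next
    case False
    have "0 < 2 * real l * exp (- \<zeta> * (1 - 2*\<gamma>) * R n / 2)" using assms(5) by simp
    from vec_angle_le_pi_scaled[OF this, of "p 0" "p l"] show ?thesis
      using False by (simp add: \<epsilon>_def mult.assoc)
  qed
  ultimately show ?thesis by blast
qed

end
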